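(* Let $n_1,\dots,n_k$ be nonnegative integers. Then $\mathcal{L}^{(t)}_H\big(\prod_{i=1}^k H^{(t)}_{n_i}(x)\big)$ equals the number of inhomogeneous coverings of $[n_1]\sqcup\dots\sqcup[n_k]$ by $t$-paths, i.e. the number of ways to partition the set $[n_1]\sqcup\dots\sqcup[n_k]$ into blocks of size $t+1$, none contained in a single $[n_i]$, and to choose for each block one of the $(t+1)!/2$ (undirected) Hamiltonian paths on that block.
   Context: Fix an integer $t\ge1$. A $t$-path in $K_n$ is a subgraph isomorphic to a path with $t$ edges. $H^{(t)}_n(x)=\sum_F(-1)^{|F|}x^{\,n-(t+1)|F|}$ over all families $F$ of pairwise vertex-disjoint $t$-paths in $K_n$ ($H^{(t)}_0=1$). Let $\mu^{(t)}_n$ be the number of coverings of all vertices of $K_n$ by pairwise vertex-disjoint $t$-paths ($\mu^{(t)}_0=1$; $\mu^{(t)}_n=0$ if $t+1\nmid n$), and let $\mathcal{L}^{(t)}_H$ be the linear functional with $\mathcal{L}^{(t)}_H(x^n)=\mu^{(t)}_n$. *)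

theory Defs
  imports "HOL-Computational_Algebra.Polynomial"
begin

text \<open>A path given by a list of distinct vertices, represented by its edge set
  (edges are 2-element sets).\<close>
definition path_edges :: "'a list \<Rightarrow> 'a set set" where
  "path_edges xs = {{xs ! i, xs ! Suc i} | i. Suc i < length xs}"

definition tpaths :: "nat \<Rightarrow> 'a set \<Rightarrow> 'a set set set" where
  "tpaths t V = {path_edges xs | xs. distinct xs \<and> length xs = Suc t \<and> set xs \<subseteq> V}"

text \<open>Vertex set of a path (union of its edges; correct for t >= 1).\<close>
definition pverts :: "'a set set \<Rightarrow> 'a set" where
  "pverts P = \<Union>P"

definition path_families :: "nat \<Rightarrow> 'a set \<Rightarrow> 'a set set set set" where
  "path_families t V = {F. F \<subseteq> tpaths t V \<and>
      (\<forall>P\<in>F. \<forall>Q\<in>F. P \<noteq> Q \<longrightarrow> pverts P \<inter> pverts Q = {})}"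

definition path_coverings :: "nat \<Rightarrow> 'a set \<Rightarrow> 'a set set set set" where
  "path_coverings t V = {F \<in> path_families t V. (\<Union>P\<in>F. pverts P) = V}"

definition Hpoly :: "nat \<Rightarrow> nat \<Rightarrow> int poly" where
  "Hpoly t n = (\<Sum>F\<in>path_families t {..<n}. monom ((-1) ^ card F) (n - Suc t * card F))"

definition mu :: "nat \<Rightarrow> nat \<Rightarrow> nat" where
  "mu t n = card (path_coverings t {..<n})"

definition LH :: "nat \<Rightarrow> int poly \<Rightarrow> int" where
  "LH t p = (\<Sum>i\<le>degree p. coeff p i * int (mu t i))"

text \<open>The disjoint union [n_1] \<sqcup> ... \<sqcup> [n_k], with ns = [n_1,...,n_k];
  element j of the i-th block (0-based) is (i, j).\<close>
definition disj_union :: "nat list \<Rightarrow> (nat \<times> nat) set" where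
  "disj_union ns = {(i, j). i < length ns \<and> j < ns ! i}"

definition inhom_coverings :: "nat \<Rightarrow> nat list \<Rightarrow> (nat \<times> nat) set set set set" where
  "inhom_coverings t ns = {F \<in> path_coverings t (disj_union ns).
      \<forall>P\<in>F. \<not> (\<exists>i. pverts P \<subseteq> {i} \<times> UNIV)}"

end

theory Submission
  imports Defs
begin

(* Write D for the disjoint union of the blocks [n_1], ..., [n_k] and call a t-path
   homogeneous if its vertices lie in a single block.
   (1) Expanding the product, prod_i H_{n_i}(x) is the sum, over all families F of disjoint
       homogeneous t-paths on D, of the weight (-1)^|F| x^(|D| - (t+1)|F|): a homogeneous family
       on D is the same as a choice of one family inside every block.
   (2) Applying the functional, x^m becomes mu_m, which is the number of path coverings of any
       m-element set, in particular of D minus the vertices of F.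
   (3) Pairs (F, G) with G a covering of the rest of D correspond to pairs (C, F) with C a
       covering of D and F a set of homogeneous paths of C.  Summing (-1)^|F| over all such F
       gives 1 if C has no homogeneous path and 0 otherwise (inclusion-exclusion). *)

lemma pverts_path_edges_subset: "pverts (path_edges xs) \<subseteq> set xs"
  unfolding pverts_def path_edges_def by auto

lemma pverts_path_edges:
  assumes "2 \<le> length xs"
  shows "pverts (path_edges xs) = set xs"
proof
  show "set xs \<subseteq> pverts (path_edges xs)"
  proof
    fix x assume "x \<in> set xs"
    then obtain j where j: "j < length xs" "x = xs ! j" by (auto simp: in_set_conv_nth)
    show "x \<in> pverts (path_edges xs)"
    proof (cases "Suc j < length xs")
      case True
      then show ?thesis unfolding pverts_def path_edges_def using j by auto
    next
      case False
      then have "j = Suc (j - 1)" using j assms by auto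
      then show ?thesis unfolding pverts_def path_edges_def using j
        by (auto intro!: exI[of _ "{xs ! (j - 1), xs ! j}"])
    qed
  qed
qed (rule pverts_path_edges_subset)

lemma tpaths_pverts_subset:
  assumes "P \<in> tpaths t V"
  shows "pverts P \<subseteq> V"
proof -
  obtain xs where "P = path_edges xs" "set xs \<subseteq> V"
    using assms unfolding tpaths_def by blast
  then show ?thesis using pverts_path_edges_subset[of xs] by simp
qed

lemma tpaths_mono: "V \<subseteq> W \<Longrightarrow> tpaths t V \<subseteq> tpaths t W"
  unfolding tpaths_def by auto

lemma tpath_represented:
  assumes "1 \<le> t" "P \<in> tpaths t V"
  obtains xs where "P = path_edges xs" "distinct xs" "length xs = Suc t" "pverts P = set xs"
proof -
  obtain xs where "P = path_edges xs" "distinct xs" "length xs = Suc t"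
    using assms(2) unfolding tpaths_def by blast
  moreover have "pverts P = set xs" using calculation assms(1) by (simp add: pverts_path_edges)
  ultimately show thesis using that by blast
qed

lemma card_pverts_tpath:
  assumes "1 \<le> t" "P \<in> tpaths t V"
  shows "card (pverts P) = Suc t"
proof -
  obtain xs where "distinct xs" "length xs = Suc t" "pverts P = set xs"
    using tpath_represented[OF assms] by blast
  then show ?thesis by (simp add: distinct_card)
qed

lemma pverts_tpath_nonempty: "1 \<le> t \<Longrightarrow> P \<in> tpaths t V \<Longrightarrow> pverts P \<noteq> {}"
  using card_pverts_tpath by force

lemma tpaths_transfer:
  assumes "1 \<le> t" "P \<in> tpaths t V" "pverts P \<subseteq> W"
  shows "P \<in> tpaths t W"
proof -
  obtain xs where "P = path_edges xs" "distinct xs" "length xs = Suc t" "pverts P = set xs"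
    using tpath_represented[OF assms(1,2)] by blast
  then show ?thesis using assms(3) unfolding tpaths_def by auto
qed

lemma finite_tpaths:
  assumes "finite V"
  shows "finite (tpaths t V)"
proof -
  have "tpaths t V \<subseteq> path_edges ` {xs. set xs \<subseteq> V \<and> length xs = Suc t}"
    unfolding tpaths_def by auto
  moreover have "finite {xs. set xs \<subseteq> V \<and> length xs = Suc t}"
    using finite_lists_length_eq[OF assms] by simp
  ultimately show ?thesis by (meson finite_imageI finite_subset)
qed

subsection \<open>Families of disjoint paths\<close>

definition covered :: "'a set set set \<Rightarrow> 'a set" where
  "covered F = (\<Union>P\<in>F. pverts P)"

lemma covered_Un: "covered (F \<union> G) = covered F \<union> covered G"
  unfolding covered_def by blast

lemma pverts_subset_covered: "P \<in> F \<Longrightarrow> pverts P \<subseteq> covered F"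
  unfolding covered_def by blast

lemma path_families_tpaths: "F \<in> path_families t V \<Longrightarrow> P \<in> F \<Longrightarrow> P \<in> tpaths t V"
  unfolding path_families_def by blast

lemma path_families_disj:
  "F \<in> path_families t V \<Longrightarrow> P \<in> F \<Longrightarrow> Q \<in> F \<Longrightarrow> P \<noteq> Q \<Longrightarrow> pverts P \<inter> pverts Q = {}"
  unfolding path_families_def by blast

lemma path_familiesI:
  assumes "F \<subseteq> tpaths t V"
    and "\<And>P Q. P \<in> F \<Longrightarrow> Q \<in> F \<Longrightarrow> P \<noteq> Q \<Longrightarrow> pverts P \<inter> pverts Q = {}"
  shows "F \<in> path_families t V"
  using assms unfolding path_families_def by blast

lemma path_families_pverts: "F \<in> path_families t V \<Longrightarrow> P \<in> F \<Longrightarrow> pverts P \<subseteq> V"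
  by (rule tpaths_pverts_subset[OF path_families_tpaths])

lemma covered_subset: "F \<in> path_families t V \<Longrightarrow> covered F \<subseteq> V"
  unfolding covered_def by (rule UN_least) (rule path_families_pverts)

lemma path_coverings_iff: "C \<in> path_coverings t V \<longleftrightarrow> C \<in> path_families t V \<and> covered C = V"
  unfolding path_coverings_def covered_def by simp

lemma finite_path_families:
  assumes "finite V"
  shows "finite (path_families t V)"
proof (rule finite_subset)
  show "path_families t V \<subseteq> Pow (tpaths t V)" unfolding path_families_def by blast
  show "finite (Pow (tpaths t V))" using finite_tpaths[OF assms] by simp
qed

lemma finite_path_family:
  assumes "finite V" "F \<in> path_families t V"
  shows "finite F"
proof (rule finite_subset)
  show "F \<subseteq> tpaths t V" using assms(2) unfolding path_families_def by blast
  show "finite (tpaths t V)" using finite_tpaths[OF assms(1)] .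
qed

lemma finite_path_coverings: "finite V \<Longrightarrow> finite (path_coverings t V)"
  by (rule finite_subset[OF _ finite_path_families]) (auto simp: path_coverings_def)

lemma card_covered:
  assumes "1 \<le> t" "finite V" "F \<in> path_families t V"
  shows "card (covered F) = Suc t * card F"
proof -
  have "card (covered F) = (\<Sum>P\<in>F. card (pverts P))"
    unfolding covered_def
  proof (rule card_UN_disjoint)
    show "finite F" using finite_path_family[OF assms(2,3)] .
    show "\<forall>P\<in>F. finite (pverts P)"
      using assms(2) path_families_tpaths[OF assms(3)] tpaths_pverts_subset finite_subset by metis
    show "\<forall>P\<in>F. \<forall>Q\<in>F. P \<noteq> Q \<longrightarrow> pverts P \<inter> pverts Q = {}"
      using path_families_disj[OF assms(3)] by blast
  qed
  also have "\<dots> = (\<Sum>P\<in>F. Suc t)"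
    using card_pverts_tpath[OF assms(1) path_families_tpaths[OF assms(3)]] by simp
  finally show ?thesis by simp
qed

lemma path_families_Un:
  assumes F: "F \<in> path_families t V" and G: "G \<in> path_families t W"
    and disj: "covered F \<inter> covered G = {}"
  shows "F \<union> G \<in> path_families t (V \<union> W)"
proof (rule path_familiesI)
  show "F \<union> G \<subseteq> tpaths t (V \<union> W)"
    using path_families_tpaths[OF F] path_families_tpaths[OF G]
      tpaths_mono[of V "V \<union> W" t] tpaths_mono[of W "V \<union> W" t] by blast
  have mixed: "pverts P \<inter> pverts Q = {}" if "P \<in> F" "Q \<in> G" for P Q
    using pverts_subset_covered[OF that(1)] pverts_subset_covered[OF that(2)] disj by blast
  show "pverts P \<inter> pverts Q = {}" if "P \<in> F \<union> G" "Q \<in> F \<union> G" "P \<noteq> Q" for P Q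
    using that path_families_disj[OF F] path_families_disj[OF G] mixed[of P Q] mixed[of Q P]
    by blast
qed

lemma path_families_disjoint:
  assumes "1 \<le> t" "F \<in> path_families t V" "covered F \<inter> covered G = {}"
  shows "F \<inter> G = {}"
proof (rule equals0I)
  fix P assume P: "P \<in> F \<inter> G"
  then have "pverts P \<subseteq> covered F \<inter> covered G" using pverts_subset_covered by blast
  moreover have "pverts P \<noteq> {}"
    using P pverts_tpath_nonempty[OF assms(1) path_families_tpaths[OF assms(2)]] by blast
  ultimately show False using assms(3) by blast
qed

lemma path_families_subfamily:
  assumes "1 \<le> t" "F \<in> path_families t V" "F' \<subseteq> F" "covered F' \<subseteq> W"
  shows "F' \<in> path_families t W"
proof (rule path_familiesI)
  show "F' \<subseteq> tpaths t W"
  proof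
    fix P assume "P \<in> F'"
    then show "P \<in> tpaths t W"
      using tpaths_transfer[OF assms(1)] path_families_tpaths[OF assms(2)] assms(3,4)
        pverts_subset_covered[of P F'] by blast
  qed
  show "pverts P \<inter> pverts Q = {}" if "P \<in> F'" "Q \<in> F'" "P \<noteq> Q" for P Q
    using path_families_disj[OF assms(2)] that assms(3) by blast
qed

lemma covered_Diff_disjoint:
  assumes "F \<in> path_families t V" "F' \<subseteq> F"
  shows "covered F' \<inter> covered (F - F') = {}"
  using assms path_families_disj[OF assms(1)] unfolding covered_def by blast

lemma path_families_split:
  assumes "1 \<le> t" "A \<inter> B = {}"
  shows "bij_betw (\<lambda>(F, G). F \<union> G) (path_families t A \<times> path_families t B)
           {H \<in> path_families t (A \<union> B). \<forall>P\<in>H. pverts P \<subseteq> A \<or> pverts P \<subseteq> B}"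
proof -
  have parts: "{P \<in> H. pverts P \<subseteq> S} \<in> path_families t S" if "H \<in> path_families t V" for H S V
    by (rule path_families_subfamily[OF assms(1) that]) (auto simp: covered_def)
  have union: "F \<union> G \<in> path_families t (A \<union> B)"
    if "F \<in> path_families t A" "G \<in> path_families t B" for F G
    using path_families_Un[OF that] covered_subset[OF that(1)] covered_subset[OF that(2)] assms(2)
    by blast
  have select: "{P \<in> F \<union> G. pverts P \<subseteq> A} = F" "{P \<in> F \<union> G. pverts P \<subseteq> B} = G"
    if "F \<in> path_families t A" "G \<in> path_families t B" for F G
  proof -
    have "pverts P \<subseteq> A" "pverts P \<noteq> {}" if "P \<in> F" for P
      using covered_subset[of F] pverts_subset_covered[OF that] \<open>F \<in> path_families t A\<close>
        pverts_tpath_nonempty[OF assms(1) path_families_tpaths] that by blast+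
    moreover have "pverts P \<subseteq> B" "pverts P \<noteq> {}" if "P \<in> G" for P
      using covered_subset[of G] pverts_subset_covered[OF that] \<open>G \<in> path_families t B\<close>
        pverts_tpath_nonempty[OF assms(1) path_families_tpaths] that by blast+
    ultimately show "{P \<in> F \<union> G. pverts P \<subseteq> A} = F" "{P \<in> F \<union> G. pverts P \<subseteq> B} = G"
      using assms(2) by blast+
  qed
  have recombine: "{P \<in> H. pverts P \<subseteq> A} \<union> {P \<in> H. pverts P \<subseteq> B} = H"
    if "\<forall>P\<in>H. pverts P \<subseteq> A \<or> pverts P \<subseteq> B" for H :: "'a set set set"
    using that by blast
  show ?thesis
  proof (rule bij_betw_byWitness[where f' = "\<lambda>H. ({P \<in> H. pverts P \<subseteq> A}, {P \<in> H. pverts P \<subseteq> B})"],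
      goal_cases)
    case 1 show ?case using select by auto
  next
    case 2 show ?case using recombine by auto
  next
    case 3 show ?case using union path_families_pverts by fastforce
  next
    case 4 show ?case using parts by auto
  qed
qed

lemma coverings_with_subfamily:
  assumes "1 \<le> t"
  shows "bij_betw (\<lambda>(F, G). (F \<union> G, F))
           (SIGMA F:{F \<in> path_families t D. \<forall>P\<in>F. Q P}. path_coverings t (D - covered F))
           (SIGMA C:path_coverings t D. Pow {P \<in> C. Q P})"
proof -
  have join: "F \<union> G \<in> path_coverings t D" "F \<inter> G = {}"
    if F: "F \<in> path_families t D" and G: "G \<in> path_coverings t (D - covered F)" for F G
  proof -
    have Gfam: "G \<in> path_families t (D - covered F)" and VG: "covered G = D - covered F"
      using G by (auto simp: path_coverings_iff)
    have disj: "covered F \<inter> covered G = {}" using VG by blast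
    have "F \<union> G \<in> path_families t (D \<union> (D - covered F))" by (rule path_families_Un[OF F Gfam disj])
    moreover have "covered (F \<union> G) = D" using covered_subset[OF F] VG by (auto simp: covered_Un)
    ultimately show "F \<union> G \<in> path_coverings t D" by (simp add: path_coverings_iff Un_absorb2)
    show "F \<inter> G = {}" by (rule path_families_disjoint[OF assms F disj])
  qed
  have split: "F \<in> path_families t D" "C - F \<in> path_coverings t (D - covered F)"
    if C: "C \<in> path_coverings t D" and F: "F \<subseteq> C" for C F
  proof -
    have Cfam: "C \<in> path_families t D" and VC: "covered C = D"
      using C by (auto simp: path_coverings_iff)
    have parts: "covered C = covered F \<union> covered (C - F)"
      using F by (metis Un_Diff_cancel Un_absorb1 covered_Un)
    show "F \<in> path_families t D"
      by (rule path_families_subfamily[OF assms Cfam F]) (use parts VC in blast)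
    have disj: "covered F \<inter> covered (C - F) = {}" by (rule covered_Diff_disjoint[OF Cfam F])
    have "C - F \<in> path_families t (D - covered F)"
      by (rule path_families_subfamily[OF assms Cfam]) (use parts VC disj in blast)+
    moreover have "covered (C - F) = D - covered F" using parts VC disj by blast
    ultimately show "C - F \<in> path_coverings t (D - covered F)" by (simp add: path_coverings_iff)
  qed
  show ?thesis
  proof (rule bij_betw_byWitness[where f' = "\<lambda>(C, F). (F, C - F)"], goal_cases)
    case 1 show ?case using join(2) by fastforce
  next
    case 2 show ?case by auto
  next
    case 3 show ?case using join(1) by auto
  next
    case 4 show ?case
    proof (rule image_subsetI)
      fix y assume "y \<in> (SIGMA C:path_coverings t D. Pow {P \<in> C. Q P})"
      then obtain C F where y: "y = (C, F)" "C \<in> path_coverings t D" "F \<subseteq> {P \<in> C. Q P}" by blast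
      then have "F \<subseteq> C" by blast
      then show "(\<lambda>(C, F). (F, C - F)) y
          \<in> (SIGMA F:{F \<in> path_families t D. \<forall>P\<in>F. Q P}. path_coverings t (D - covered F))"
        using split[OF y(2)] y by auto
    qed
  qed
qed

subsection \<open>Relabelling vertices\<close>

text \<open>Along an injective map the
  families and coverings on V correspond to those on the image of V; hence the number of
  coverings only depends on the number of vertices.\<close>
definition relabel :: "('a \<Rightarrow> 'b) \<Rightarrow> 'a set set set \<Rightarrow> 'b set set set" where
  "relabel g F = (`) ((`) g) ` F"

lemma path_edges_map: "path_edges (map g xs) = (`) g ` path_edges xs"
proof (intro equalityI subsetI)
  fix e assume "e \<in> path_edges (map g xs)"
  then obtain i where i: "Suc i < length xs" "e = g ` {xs ! i, xs ! Suc i}"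
    unfolding path_edges_def by auto
  show "e \<in> (`) g ` path_edges xs"
    using i unfolding path_edges_def by (intro image_eqI[of _ _ "{xs ! i, xs ! Suc i}"]) auto
next
  fix e assume "e \<in> (`) g ` path_edges xs"
  then obtain i where i: "Suc i < length xs" "e = g ` {xs ! i, xs ! Suc i}"
    unfolding path_edges_def by auto
  then show "e \<in> path_edges (map g xs)"
    unfolding path_edges_def by (auto intro!: exI[of _ i])
qed

lemma pverts_image: "pverts ((`) g ` P) = g ` pverts P"
  unfolding pverts_def by auto

lemma covered_relabel: "covered (relabel g F) = g ` covered F"
  unfolding covered_def relabel_def by (simp add: pverts_image image_UN)

lemma tpaths_image:
  assumes "inj_on g V" "P \<in> tpaths t V"
  shows "(`) g ` P \<in> tpaths t (g ` V)"
proof -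
  obtain xs where xs: "P = path_edges xs" "distinct xs" "length xs = Suc t" "set xs \<subseteq> V"
    using assms(2) unfolding tpaths_def by blast
  have "distinct (map g xs)" using xs assms(1) by (simp add: distinct_map inj_on_subset)
  then show ?thesis unfolding tpaths_def using xs path_edges_map[of g xs]
    by (intro CollectI exI[of _ "map g xs"]) auto
qed

lemma path_families_relabel:
  assumes "inj_on g V" "F \<in> path_families t V"
  shows "relabel g F \<in> path_families t (g ` V)"
proof (rule path_familiesI)
  show "relabel g F \<subseteq> tpaths t (g ` V)"
    unfolding relabel_def using tpaths_image[OF assms(1) path_families_tpaths[OF assms(2)]] by blast
  fix P' Q' assume "P' \<in> relabel g F" "Q' \<in> relabel g F" "P' \<noteq> Q'"
  then obtain P Q where PQ: "P \<in> F" "Q \<in> F" "P' = (`) g ` P" "Q' = (`) g ` Q" "P \<noteq> Q"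
    unfolding relabel_def by blast
  have "pverts P \<subseteq> V" "pverts Q \<subseteq> V" using path_families_pverts[OF assms(2)] PQ(1,2) by auto
  then have "g ` pverts P \<inter> g ` pverts Q = g ` (pverts P \<inter> pverts Q)"
    using assms(1) by (simp add: inj_on_image_Int)
  then show "pverts P' \<inter> pverts Q' = {}"
    using PQ path_families_disj[OF assms(2)] by (simp add: pverts_image)
qed

lemma relabel_cancel:
  assumes "\<And>P e. P \<in> F \<Longrightarrow> e \<in> P \<Longrightarrow> h ` g ` e = e"
  shows "relabel h (relabel g F) = F" and "inj_on ((`) ((`) g)) F"
proof -
  have inv: "(`) h ` (`) g ` P = P" if "P \<in> F" for P
    using assms[OF that] by (simp add: image_image)
  then show "relabel h (relabel g F) = F" unfolding relabel_def by (simp add: image_image)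
  show "inj_on ((`) ((`) g)) F" by (rule inj_on_inverseI[where g = "(`) ((`) h)"]) (rule inv)
qed

lemma edge_subset: "F \<in> path_families t V \<Longrightarrow> P \<in> F \<Longrightarrow> e \<in> P \<Longrightarrow> e \<subseteq> V"
  using path_families_pverts unfolding pverts_def by blast

lemma relabel_inv_into:
  assumes "inj_on g V" "F \<in> path_families t V"
  shows "relabel (inv_into V g) (relabel g F) = F" and "inj_on ((`) ((`) g)) F"
proof -
  have cancel: "inv_into V g ` g ` e = e" if "P \<in> F" "e \<in> P" for P e
    using inv_into_image_cancel[OF assms(1) edge_subset[OF assms(2) that]] .
  show "relabel (inv_into V g) (relabel g F) = F" by (rule relabel_cancel(1)[OF cancel])
  show "inj_on ((`) ((`) g)) F" by (rule relabel_cancel(2)[OF cancel])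
qed

lemma card_relabel:
  assumes "inj_on g V" "F \<in> path_families t V"
  shows "card (relabel g F) = card F"
  unfolding relabel_def using relabel_inv_into(2)[OF assms] by (rule card_image)

lemma bij_betw_relabel:
  assumes "inj_on g V"
  shows "bij_betw (relabel g) (path_families t V) (path_families t (g ` V))"
proof (rule bij_betw_byWitness[where f' = "relabel (inv_into V g)"])
  let ?h = "inv_into V g"
  have h_inj: "inj_on ?h (g ` V)" by (rule inj_on_inv_into) (rule subset_refl)
  have h_img: "?h ` g ` V = V" by (rule inv_into_image_cancel[OF assms subset_refl])
  show "\<forall>F\<in>path_families t V. relabel ?h (relabel g F) = F"
    using relabel_inv_into(1)[OF assms] by blast
  have "relabel g (relabel ?h F) = F" if "F \<in> path_families t (g ` V)" for F
  proof (rule relabel_cancel(1))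
    fix P e assume "P \<in> F" "e \<in> P"
    then show "g ` ?h ` e = e" by (rule image_inv_into_cancel[OF refl edge_subset[OF that]])
  qed
  then show "\<forall>F\<in>path_families t (g ` V). relabel g (relabel ?h F) = F" by blast
  show "relabel g ` path_families t V \<subseteq> path_families t (g ` V)"
    using path_families_relabel[OF assms] by blast
  show "relabel ?h ` path_families t (g ` V) \<subseteq> path_families t V"
    using path_families_relabel[OF h_inj] unfolding h_img by blast
qed

lemma card_path_coverings:
  assumes "finite V"
  shows "card (path_coverings t V) = mu t (card V)"
proof -
  obtain g where "bij_betw g V {..<card V}"
    using ex_bij_betw_finite_nat[OF assms] by (auto simp: atLeast0LessThan)
  then have g: "inj_on g V" "g ` V = {..<card V}" by (auto simp: bij_betw_def)
  note bij = bij_betw_relabel[OF g(1), of t]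
  have img: "relabel g ` path_coverings t V = path_coverings t (g ` V)"
  proof (intro equalityI subsetI)
    fix C' assume "C' \<in> relabel g ` path_coverings t V"
    then obtain C where "C \<in> path_families t V" "covered C = V" "C' = relabel g C"
      by (auto simp: path_coverings_iff)
    then show "C' \<in> path_coverings t (g ` V)"
      using path_families_relabel[OF g(1)] by (simp add: path_coverings_iff covered_relabel)
  next
    fix C' assume C': "C' \<in> path_coverings t (g ` V)"
    then have "C' \<in> relabel g ` path_families t V"
      using bij_betw_imp_surj_on[OF bij] by (simp add: path_coverings_iff)
    then obtain C where C: "C \<in> path_families t V" "C' = relabel g C" by blast
    have "g ` covered C = g ` V" using C' C(2) by (simp add: path_coverings_iff covered_relabel)
    then have "covered C = V" by (rule inj_on_image_eq_iff[OF g(1) covered_subset[OF C(1)] subset_refl, THEN iffD1])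
    then show "C' \<in> relabel g ` path_coverings t V" using C by (simp add: path_coverings_iff)
  qed
  have "path_coverings t V \<subseteq> path_families t V" by (simp add: path_coverings_def)
  then have "bij_betw (relabel g) (path_coverings t V) (path_coverings t (g ` V))"
    using img by (rule bij_betw_subset[OF bij])
  then show ?thesis unfolding mu_def g(2)[symmetric] by (rule bij_betw_same_card)
qed

subsection \<open>The linear functional\<close>

text \<open>The functional may be computed with any degree bound, which makes it additive, so it
  commutes with finite sums and is determined by its values on monomials.\<close>
lemma LH_degree_bound:
  assumes "degree p \<le> N"
  shows "LH t p = (\<Sum>i\<le>N. coeff p i * int (mu t i))"
  unfolding LH_def using assms by (intro sum.mono_neutral_left) (auto simp: coeff_eq_0)

lemma LH_add: "LH t (p + q) = LH t p + LH t q"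
proof -
  let ?N = "max (degree p) (degree q)"
  have "LH t (p + q) = (\<Sum>i\<le>?N. coeff (p + q) i * int (mu t i))"
    by (rule LH_degree_bound) (rule degree_add_le_max)
  also have "\<dots> = (\<Sum>i\<le>?N. coeff p i * int (mu t i)) + (\<Sum>i\<le>?N. coeff q i * int (mu t i))"
    by (simp add: distrib_right sum.distrib)
  also have "\<dots> = LH t p + LH t q"
    by (simp add: LH_degree_bound[symmetric])
  finally show ?thesis .
qed

lemma LH_zero: "LH t 0 = 0"
  by (simp add: LH_def)

lemma LH_sum: "LH t (\<Sum>s\<in>S. f s) = (\<Sum>s\<in>S. LH t (f s))"
  by (induction S rule: infinite_finite_induct) (simp_all add: LH_zero LH_add)

lemma LH_monom: "LH t (monom c n) = c * int (mu t n)"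
proof -
  have "LH t (monom c n) = (\<Sum>i\<le>n. coeff (monom c n) i * int (mu t i))"
    by (rule LH_degree_bound) (rule degree_monom_le)
  also have "\<dots> = (\<Sum>i\<le>n. if i = n then c * int (mu t i) else 0)"
    by (rule sum.cong) (auto simp: coeff_monom)
  also have "\<dots> = c * int (mu t n)" by simp
  finally show ?thesis .
qed

subsection \<open>Inclusion-exclusion over coverings\<close>

definition weight :: "nat \<Rightarrow> 'a set \<Rightarrow> 'a set set set \<Rightarrow> int poly" where
  "weight t V F = monom ((-1) ^ card F) (card V - Suc t * card F)"

lemma sum_Pow_signs: "finite A \<Longrightarrow> (\<Sum>X\<in>Pow A. (-1::int) ^ card X) = (if A = {} then 1 else 0)"
  using prod_diff_conv_sum[of A "\<lambda>_. 1::int" "\<lambda>_. 1"] by (auto simp: power_0_left)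

theorem LH_sum_weights:
  assumes "1 \<le> t" "finite D"
  shows "LH t (\<Sum>F\<in>{F \<in> path_families t D. \<forall>P\<in>F. Q P}. weight t D F)
       = int (card {C \<in> path_coverings t D. \<forall>P\<in>C. \<not> Q P})"
proof -
  let ?Fam = "{F \<in> path_families t D. \<forall>P\<in>F. Q P}"
  let ?S = "SIGMA F:?Fam. path_coverings t (D - covered F)"
  let ?T = "SIGMA C:path_coverings t D. Pow {P \<in> C. Q P}"
  have finC: "finite C" if "C \<in> path_coverings t D" for C
    using that finite_path_family[OF assms(2)] unfolding path_coverings_iff by blast
  have "LH t (\<Sum>F\<in>?Fam. weight t D F) = (\<Sum>F\<in>?Fam. (-1) ^ card F * int (mu t (card D - Suc t * card F)))"
    by (simp add: LH_sum LH_monom weight_def)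
  also have "\<dots> = (\<Sum>F\<in>?Fam. \<Sum>G\<in>path_coverings t (D - covered F). (-1::int) ^ card F)"
  proof (rule sum.cong[OF refl])
    fix F assume "F \<in> ?Fam"
    then have F: "F \<in> path_families t D" by blast
    have "card (D - covered F) = card D - Suc t * card F"
      using card_Diff_subset[OF finite_subset[OF covered_subset[OF F] assms(2)] covered_subset[OF F]]
        card_covered[OF assms F] by simp
    then show "(-1) ^ card F * int (mu t (card D - Suc t * card F))
        = (\<Sum>G\<in>path_coverings t (D - covered F). (-1::int) ^ card F)"
      using card_path_coverings[of "D - covered F" t] assms(2) by simp
  qed
  also have "\<dots> = (\<Sum>(F, G)\<in>?S. (-1::int) ^ card F)"
    using assms(2) by (intro sum.Sigma) (auto intro: finite_path_coverings finite_subset[OF _ finite_path_families])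
  also have "\<dots> = (\<Sum>x\<in>?S. (\<lambda>(C, F). (-1::int) ^ card F) ((\<lambda>(F, G). (F \<union> G, F)) x))"
    by (rule sum.cong) auto
  also have "\<dots> = (\<Sum>(C, F)\<in>?T. (-1::int) ^ card F)"
    by (rule sum.reindex_bij_betw[OF coverings_with_subfamily[OF assms(1)]])
  also have "\<dots> = (\<Sum>C\<in>path_coverings t D. \<Sum>F\<in>Pow {P \<in> C. Q P}. (-1::int) ^ card F)"
    using finite_path_coverings[OF assms(2)] finC by (intro sum.Sigma[symmetric]) auto
  also have "\<dots> = (\<Sum>C\<in>path_coverings t D. if \<forall>P\<in>C. \<not> Q P then 1 else 0)"
    using finC by (intro sum.cong[OF refl]) (simp add: sum_Pow_signs)
  also have "\<dots> = int (card {C \<in> path_coverings t D. \<forall>P\<in>C. \<not> Q P})"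
    using sum.inter_filter[OF finite_path_coverings[OF assms(2)], of "\<lambda>_. 1::int"] by simp
  finally show ?thesis .
qed

subsection \<open>Expanding the product over the blocks\<close>

definition blocks :: "(nat \<Rightarrow> nat) \<Rightarrow> nat \<Rightarrow> (nat \<times> nat) set" where
  "blocks f k = {(i, j). i < k \<and> j < f i}"

definition homogeneous :: "(nat \<times> nat) set set \<Rightarrow> bool" where
  "homogeneous P \<longleftrightarrow> (\<exists>i. pverts P \<subseteq> {i} \<times> UNIV)"

lemma blocks_Suc: "blocks f (Suc k) = blocks f k \<union> {k} \<times> {..<f k}"
  unfolding blocks_def by (auto simp: less_Suc_eq)

lemma blocks_disjoint: "blocks f k \<inter> {k} \<times> {..<f k} = {}"
  unfolding blocks_def by auto

lemma finite_blocks: "finite (blocks f k)"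
  by (induction k) (simp_all add: blocks_Suc, simp add: blocks_def)

lemma homogeneous_in_blocks_Suc:
  assumes "homogeneous P" "pverts P \<subseteq> blocks f (Suc k)"
  shows "pverts P \<subseteq> blocks f k \<or> pverts P \<subseteq> {k} \<times> {..<f k}"
proof -
  obtain i where i: "pverts P \<subseteq> {i} \<times> UNIV" using assms(1) unfolding homogeneous_def by blast
  show ?thesis
  proof (cases "i = k")
    case True then show ?thesis using i assms(2) unfolding blocks_def by auto
  next
    case False then show ?thesis using i assms(2) unfolding blocks_def by (auto simp: less_Suc_eq)
  qed
qed

lemma weight_Un:
  assumes "1 \<le> t" "finite A" "finite B" "A \<inter> B = {}"
    and F: "F \<in> path_families t A" and G: "G \<in> path_families t B"
  shows "weight t A F * weight t B G = weight t (A \<union> B) (F \<union> G)"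
proof -
  have "covered F \<inter> covered G = {}"
    using covered_subset[OF F] covered_subset[OF G] assms(4) by blast
  then have "card (F \<union> G) = card F + card G"
    using finite_path_family[OF assms(2) F] finite_path_family[OF assms(3) G]
      path_families_disjoint[OF assms(1) F] by (simp add: card_Un_disjoint)
  moreover have "Suc t * card F \<le> card A"
    using card_covered[OF assms(1,2) F] card_mono[OF assms(2) covered_subset[OF F]] by simp
  moreover have "Suc t * card G \<le> card B"
    using card_covered[OF assms(1,3) G] card_mono[OF assms(3) covered_subset[OF G]] by simp
  moreover have "card (A \<union> B) = card A + card B" using assms(2-4) by (simp add: card_Un_disjoint)
  ultimately show ?thesis by (simp add: weight_def mult_monom power_add algebra_simps)
qed

lemma sum_weights_relabel:
  assumes "inj_on g V"
  shows "(\<Sum>F\<in>path_families t (g ` V). weight t (g ` V) F) = (\<Sum>F\<in>path_families t V. weight t V F)"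
proof -
  have "(\<Sum>F\<in>path_families t (g ` V). weight t (g ` V) F)
      = (\<Sum>F\<in>path_families t V. weight t (g ` V) (relabel g F))"
    by (rule sum.reindex_bij_betw[OF bij_betw_relabel[OF assms], symmetric])
  also have "\<dots> = (\<Sum>F\<in>path_families t V. weight t V F)"
    using assms by (intro sum.cong[OF refl]) (simp add: weight_def card_relabel card_image)
  finally show ?thesis .
qed

lemma Hpoly_block: "Hpoly t n = (\<Sum>G\<in>path_families t ({k} \<times> {..<n}). weight t ({k} \<times> {..<n}) G)"
proof -
  have "inj_on (Pair k) {..<n}" by (rule inj_onI) simp
  moreover have "Pair k ` {..<n} = {k} \<times> {..<n}" by auto
  ultimately show ?thesis
    using sum_weights_relabel[of "Pair k" "{..<n}" t] by (simp add: Hpoly_def weight_def)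
qed

lemma homogeneous_families_Suc:
  assumes "1 \<le> t"
  shows "bij_betw (\<lambda>(F, G). F \<union> G)
           ({F \<in> path_families t (blocks f k). \<forall>P\<in>F. homogeneous P} \<times> path_families t ({k} \<times> {..<f k}))
           {H \<in> path_families t (blocks f (Suc k)). \<forall>P\<in>H. homogeneous P}"
proof -
  let ?A = "blocks f k" and ?B = "{k} \<times> {..<f k}"
  have split: "bij_betw (\<lambda>(F, G). F \<union> G) (path_families t ?A \<times> path_families t ?B)
      {H \<in> path_families t (blocks f (Suc k)). \<forall>P\<in>H. pverts P \<subseteq> ?A \<or> pverts P \<subseteq> ?B}"
    using path_families_split[OF assms blocks_disjoint] unfolding blocks_Suc .
  have "(\<lambda>(F, G). F \<union> G) ` ({F \<in> path_families t ?A. \<forall>P\<in>F. homogeneous P} \<times> path_families t ?B)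
      = {H \<in> path_families t (blocks f (Suc k)). \<forall>P\<in>H. homogeneous P}"
  proof (intro equalityI subsetI)
    fix H assume "H \<in> (\<lambda>(F, G). F \<union> G) ` ({F \<in> path_families t ?A. \<forall>P\<in>F. homogeneous P} \<times> path_families t ?B)"
    then obtain F G where H: "H = F \<union> G" "F \<in> path_families t ?A" "\<forall>P\<in>F. homogeneous P"
      "G \<in> path_families t ?B" by auto
    have "(\<lambda>(F, G). F \<union> G) (F, G) \<in> (\<lambda>(F, G). F \<union> G) ` (path_families t ?A \<times> path_families t ?B)"
      using H by (intro imageI) blast
    then have "H \<in> path_families t (blocks f (Suc k))"
      unfolding bij_betw_imp_surj_on[OF split] H(1) by simp
    moreover have "homogeneous P" if "P \<in> G" for P
      unfolding homogeneous_def using path_families_pverts[OF H(4) that] by (intro exI[of _ k]) auto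
    ultimately show "H \<in> {H \<in> path_families t (blocks f (Suc k)). \<forall>P\<in>H. homogeneous P}"
      using H by auto
  next
    fix H assume H: "H \<in> {H \<in> path_families t (blocks f (Suc k)). \<forall>P\<in>H. homogeneous P}"
    have "pverts P \<subseteq> ?A \<or> pverts P \<subseteq> ?B" if "P \<in> H" for P
      using H that homogeneous_in_blocks_Suc[OF _ path_families_pverts] by blast
    then have "\<forall>P\<in>H. pverts P \<subseteq> ?A \<or> pverts P \<subseteq> ?B" by blast
    then have "H \<in> (\<lambda>(F, G). F \<union> G) ` (path_families t ?A \<times> path_families t ?B)"
      unfolding bij_betw_imp_surj_on[OF split] using H by simp
    then obtain F G where FG: "H = F \<union> G" "F \<in> path_families t ?A" "G \<in> path_families t ?B"
      by auto
    have "(F, G) \<in> {F \<in> path_families t ?A. \<forall>P\<in>F. homogeneous P} \<times> path_families t ?B"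
      using FG H by auto
    then show "H \<in> (\<lambda>(F, G). F \<union> G) ` ({F \<in> path_families t ?A. \<forall>P\<in>F. homogeneous P} \<times> path_families t ?B)"
      by (rule image_eqI[rotated]) (simp add: FG(1))
  qed
  then show ?thesis by (rule bij_betw_subset[OF split, rotated]) blast
qed

theorem prod_Hpoly_blocks:
  assumes "1 \<le> t"
  shows "(\<Prod>i<k. Hpoly t (f i))
       = (\<Sum>F\<in>{F \<in> path_families t (blocks f k). \<forall>P\<in>F. homogeneous P}. weight t (blocks f k) F)"
proof (induction k)
  case 0
  have empty: "path_families t {} = {{}}" by (auto simp: path_families_def tpaths_def)
  have "{F \<in> path_families t (blocks f 0). \<forall>P\<in>F. homogeneous P} = {{}}"
    by (auto simp: blocks_def empty)
  then show ?case by (simp add: blocks_def weight_def)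
next
  case (Suc k)
  let ?A = "blocks f k" and ?B = "{k} \<times> {..<f k}"
  let ?Hom = "\<lambda>k. {F \<in> path_families t (blocks f k). \<forall>P\<in>F. homogeneous P}"
  have "(\<Prod>i<Suc k. Hpoly t (f i))
      = (\<Sum>F\<in>?Hom k. weight t ?A F) * (\<Sum>G\<in>path_families t ?B. weight t ?B G)"
    using Suc.IH Hpoly_block[of t "f k" k] by simp
  also have "\<dots> = (\<Sum>(F, G)\<in>?Hom k \<times> path_families t ?B. weight t ?A F * weight t ?B G)"
    by (simp add: sum_product sum.cartesian_product)
  also have "\<dots> = (\<Sum>(F, G)\<in>?Hom k \<times> path_families t ?B. weight t (blocks f (Suc k)) (F \<union> G))"
    using weight_Un[OF assms finite_blocks _ blocks_disjoint] unfolding blocks_Suc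
    by (intro sum.cong[OF refl]) auto
  also have "\<dots> = (\<Sum>H\<in>?Hom (Suc k). weight t (blocks f (Suc k)) H)"
    using sum.reindex_bij_betw[OF homogeneous_families_Suc[OF assms], of "weight t (blocks f (Suc k))"]
    by (simp add: split_def)
  finally show ?case .
qed

theorem mainTheorem12:
  fixes t :: nat and ns :: "nat list"
  assumes "t \<ge> 1"
  shows "LH t (\<Prod>i<length ns. Hpoly t (ns ! i)) = int (card (inhom_coverings t ns))"
proof -
  have D: "blocks (\<lambda>i. ns ! i) (length ns) = disj_union ns"
    unfolding blocks_def disj_union_def by simp
  have fin: "finite (disj_union ns)" unfolding D[symmetric] by (rule finite_blocks)
  have "inhom_coverings t ns
      = {C \<in> path_coverings t (disj_union ns). \<forall>P\<in>C. \<not> homogeneous P}"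
    unfolding inhom_coverings_def homogeneous_def by simp
  then show ?thesis
    using prod_Hpoly_blocks[OF assms, of "\<lambda>i. ns ! i" "length ns"]
      LH_sum_weights[OF assms fin, of homogeneous] by (simp add: D)
qed

end
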